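(* Let $g:\mathbb{R}^n\setminus\{0\}\to\mathbb{R}^n$ denote the gradient $\nabla f$ of a function $f$, let $\tfrac14<\tau<1$ and $\epsilon>0$. Let $\mathbf{x}_0,\mathbf{x}_1,\mathbf{x}_2,\dots$ be nonzero vectors, and define $\mathbf{p}_0=\nabla f(\mathbf{x}_0)$ and, for $k\ge1$, $$\mathbf{p}_k=\nabla f(\mathbf{x}_k)+\beta_{k-1}\mathbf{d}_{k-1},\qquad \mathbf{d}_{k-1}=\mathbf{x}_k-\mathbf{x}_{k-1},\quad \mathbf{y}_{k-1}=\nabla f(\mathbf{x}_k)-\nabla f(\mathbf{x}_{k-1}),$$ where $\beta_{k-1}=\max(0,\tilde\beta_{k-1})$ with $$\tilde\beta_{k-1}=\begin{cases}\left(\tau\,\mathbf{d}_{k-1}\dfrac{\|\mathbf{y}_{k-1}\|^2}{\mathbf{d}_{k-1}^\top\mathbf{y}_{k-1}}-\mathbf{y}_{k-1}\right)^{\!\top}\dfrac{\nabla f(\mathbf{x}_k)}{\mathbf{d}_{k-1}^\top\mathbf{y}_{k-1}} & \text{if } |\mathbf{d}_{k-1}^\top\mathbf{y}_{k-1}|\ge\epsilon\|\mathbf{d}_{k-1}\|\|\mathbf{y}_{k-1}\| \text{ (and } \mathbf{d}_{k-1}^\top\mathbf{y}_{k-1}\neq0),\\ 0&\text{otherwise.}\end{cases}$$ Then for every $k\ge0$, $$\mathbf{p}_k^\top\nabla f(\mathbf{x}_k)\ge\Big(1-\frac{1}{4\tau}\Big)\|\nabla f(\mathbf{x}_k)\|^2,$$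 and there is a constant $M_0>1$, independent of $k$, such that $\|\mathbf{p}_k\|\le M_0\|\nabla f(\mathbf{x}_k)\|$ for all $k$.
   Context: $\|\cdot\|$ is the Euclidean norm. In the paper $f$ is the objective $f(\mathbf{x})=(r-1)!\,\mathcal{A}\mathbf{x}^r/\|\mathbf{x}\|_p^r$ of the $p$-spectral radius problem, but the statement only uses that $\nabla f$ is a vector-valued map. *)

theory Defs
  imports "HOL-Analysis.Analysis"
begin

definition beta_tilde :: "real \<Rightarrow> real \<Rightarrow> 'a::real_inner \<Rightarrow> 'a \<Rightarrow> 'a \<Rightarrow> real" where
  "beta_tilde \<tau> \<epsilon> d y gk =
     (if d \<bullet> y \<noteq> 0 \<and> \<bar>d \<bullet> y\<bar> \<ge> \<epsilon> * norm d * norm y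
      then ((((\<tau> * (norm y)^2 / (d \<bullet> y)) *\<^sub>R d) - y) \<bullet> gk) / (d \<bullet> y)
      else 0)"

definition cg_dir :: "('a::real_inner \<Rightarrow> 'a) \<Rightarrow> real \<Rightarrow> real \<Rightarrow> (nat \<Rightarrow> 'a) \<Rightarrow> nat \<Rightarrow> 'a" where
  "cg_dir g \<tau> \<epsilon> x k =
     (case k of
        0 \<Rightarrow> g (x 0)
      | Suc j \<Rightarrow> g (x (Suc j)) +
          max 0 (beta_tilde \<tau> \<epsilon> (x (Suc j) - x j) (g (x (Suc j)) - g (x j)) (g (x (Suc j))))
            *\<^sub>R (x (Suc j) - x j))"

end

theory Submission
  imports Defs
begin

text \<open>
  Write \<open>s = d \<bullet> y\<close> and \<open>u = (d \<bullet> g) / s\<close>. Whenever \<open>\<tilde>\<beta>\<close> is active, \<open>\<tilde>\<beta> (d \<bullet> g)\<close> is the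
  quadratic \<open>\<tau> \<parallel>y\<parallel>\<^sup>2 u\<^sup>2 - (y \<bullet> g) u\<close>, which by Cauchy-Schwarz is at least the minimum
  \<open>-\<parallel>g\<parallel>\<^sup>2/(4\<tau>)\<close> of \<open>\<tau> t\<^sup>2 - \<parallel>g\<parallel> t\<close>; this gives the descent bound. The safeguard
  \<open>\<epsilon> \<parallel>d\<parallel> \<parallel>y\<parallel> \<le> \<bar>s\<bar>\<close> bounds \<open>\<parallel>d\<parallel> \<parallel>y\<parallel> / \<bar>s\<bar>\<close> by \<open>1/\<epsilon>\<close>, hence \<open>\<bar>\<tilde>\<beta>\<bar> \<parallel>d\<parallel> \<le> (\<tau>/\<epsilon>\<^sup>2 + 1/\<epsilon>) \<parallel>g\<parallel>\<close>,
  which gives the bound on the directions with \<open>M\<^sub>0 = 1 + \<tau>/\<epsilon>\<^sup>2 + 1/\<epsilon>\<close>.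
\<close>

lemma quadratic_ge_neg_square_div:
  fixes \<tau> b t :: real
  assumes "\<tau> > 0"
  shows "- (b^2 / (4 * \<tau>)) \<le> \<tau> * t^2 - b * t"
proof -
  have "0 \<le> (2 * \<tau> * t - b)^2" by simp
  then have "0 \<le> b^2 + 4 * \<tau> * (\<tau> * t^2 - b * t)"
    by (simp add: power2_eq_square algebra_simps)
  with assms show ?thesis by (simp add: field_simps)
qed

lemma beta_tilde_eq:
  assumes "d \<bullet> y \<noteq> 0" and "\<epsilon> * norm d * norm y \<le> \<bar>d \<bullet> y\<bar>"
  shows "beta_tilde \<tau> \<epsilon> d y gk = \<tau> * (norm y)^2 * (d \<bullet> gk) / (d \<bullet> y)^2 - (y \<bullet> gk) / (d \<bullet> y)"
  using assms by (simp add: beta_tilde_def inner_diff_left field_simps power2_eq_square)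

lemma beta_tilde_eq_0:
  assumes "\<not> (d \<bullet> y \<noteq> 0 \<and> \<epsilon> * norm d * norm y \<le> \<bar>d \<bullet> y\<bar>)"
  shows "beta_tilde \<tau> \<epsilon> d y gk = 0"
  using assms unfolding beta_tilde_def by (rule if_not_P)

lemma beta_tilde_mult_inner_ge:
  fixes d y gk :: "'a::real_inner"
  assumes "\<tau> > 0"
  shows "- ((norm gk)^2 / (4 * \<tau>)) \<le> beta_tilde \<tau> \<epsilon> d y gk * (d \<bullet> gk)"
proof (cases "d \<bullet> y \<noteq> 0 \<and> \<epsilon> * norm d * norm y \<le> \<bar>d \<bullet> y\<bar>")
  case True
  define u where "u = (d \<bullet> gk) / (d \<bullet> y)"
  have "beta_tilde \<tau> \<epsilon> d y gk * (d \<bullet> gk) = \<tau> * (norm y * \<bar>u\<bar>)^2 - (y \<bullet> gk) * u"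
    using True by (simp add: beta_tilde_eq u_def field_simps power2_eq_square)
  moreover have "(y \<bullet> gk) * u \<le> norm gk * (norm y * \<bar>u\<bar>)"
  proof -
    have "(y \<bullet> gk) * u \<le> \<bar>y \<bullet> gk\<bar> * \<bar>u\<bar>" by (metis abs_ge_self abs_mult)
    also have "\<dots> \<le> norm y * norm gk * \<bar>u\<bar>"
      by (simp add: Cauchy_Schwarz_ineq2 mult_right_mono)
    finally show ?thesis by (simp add: algebra_simps)
  qed
  ultimately show ?thesis
    using quadratic_ge_neg_square_div[OF assms, of "norm gk" "norm y * \<bar>u\<bar>"] by linarith
next
  case False
  with assms show ?thesis by (simp add: beta_tilde_eq_0)
qed

lemma abs_beta_tilde_mult_norm_le:
  fixes d y gk :: "'a::real_inner"
  assumes "\<tau> \<ge> 0" and "\<epsilon> > 0"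
  shows "\<bar>beta_tilde \<tau> \<epsilon> d y gk\<bar> * norm d \<le> (\<tau> / \<epsilon>^2 + 1 / \<epsilon>) * norm gk"
proof (cases "d \<bullet> y \<noteq> 0 \<and> \<epsilon> * norm d * norm y \<le> \<bar>d \<bullet> y\<bar>")
  case True
  define r where "r = norm d * norm y / \<bar>d \<bullet> y\<bar>"
  have r: "0 \<le> r" "r \<le> 1 / \<epsilon>"
    using True assms(2) by (auto simp: r_def field_simps)
  have "\<bar>beta_tilde \<tau> \<epsilon> d y gk\<bar> * norm d
      \<le> (\<tau> * (norm y)^2 * \<bar>d \<bullet> gk\<bar> / (d \<bullet> y)^2 + \<bar>y \<bullet> gk\<bar> / \<bar>d \<bullet> y\<bar>) * norm d"
    using True assms(1) abs_triangle_ineq4[of "\<tau> * (norm y)^2 * (d \<bullet> gk) / (d \<bullet> y)^2" "(y \<bullet> gk) / (d \<bullet> y)"]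
    by (auto simp: beta_tilde_eq abs_mult intro!: mult_right_mono)
  also have "\<dots> \<le> (\<tau> * (norm y)^2 * (norm d * norm gk) / (d \<bullet> y)^2
                    + norm y * norm gk / \<bar>d \<bullet> y\<bar>) * norm d"
    using assms(1)
    by (intro mult_right_mono add_mono divide_right_mono mult_left_mono Cauchy_Schwarz_ineq2) auto
  also have "\<dots> = (\<tau> * r^2 + r) * norm gk"
    using True by (simp add: r_def field_simps power2_eq_square)
  also have "\<dots> \<le> (\<tau> * (1 / \<epsilon>)^2 + 1 / \<epsilon>) * norm gk"
    using r assms(1) by (intro mult_right_mono add_mono mult_left_mono power_mono) auto
  also have "\<dots> = (\<tau> / \<epsilon>^2 + 1 / \<epsilon>) * norm gk"
    by (simp add: power_divide)
  finally show ?thesis .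
next
  case False
  with assms show ?thesis by (simp add: beta_tilde_eq_0)
qed

lemma cg_dir_eq_add_scaleR:
  obtains b d y where "cg_dir g \<tau> \<epsilon> x k = g (x k) + b *\<^sub>R d"
    and "b = 0 \<or> b = beta_tilde \<tau> \<epsilon> d y (g (x k))"
proof (cases k)
  case 0
  then show ?thesis using that[of 0] by (simp add: cg_dir_def)
next
  case (Suc j)
  let ?\<beta> = "beta_tilde \<tau> \<epsilon> (x k - x j) (g (x k) - g (x j)) (g (x k))"
  have "cg_dir g \<tau> \<epsilon> x k = g (x k) + max 0 ?\<beta> *\<^sub>R (x k - x j)"
    using Suc by (simp add: cg_dir_def)
  moreover have "max 0 ?\<beta> = 0 \<or> max 0 ?\<beta> = ?\<beta>" by (simp add: max_def)
  ultimately show ?thesis by (rule that)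
qed

lemma cg_dir_inner_ge:
  assumes "\<tau> > 0"
  shows "(1 - 1 / (4 * \<tau>)) * (norm (g (x k)))^2 \<le> cg_dir g \<tau> \<epsilon> x k \<bullet> g (x k)"
proof -
  obtain b d y where dir: "cg_dir g \<tau> \<epsilon> x k = g (x k) + b *\<^sub>R d"
    and b: "b = 0 \<or> b = beta_tilde \<tau> \<epsilon> d y (g (x k))"
    by (rule cg_dir_eq_add_scaleR)
  have "- ((norm (g (x k)))^2 / (4 * \<tau>)) \<le> b * (d \<bullet> g (x k))"
    using b beta_tilde_mult_inner_ge[OF assms] assms by auto
  moreover have "cg_dir g \<tau> \<epsilon> x k \<bullet> g (x k) = (norm (g (x k)))^2 + b * (d \<bullet> g (x k))"
    by (simp add: dir inner_add_left power2_norm_eq_inner)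
  ultimately show ?thesis by (simp add: algebra_simps)
qed

lemma norm_cg_dir_le:
  assumes "\<tau> \<ge> 0" and "\<epsilon> > 0"
  shows "norm (cg_dir g \<tau> \<epsilon> x k) \<le> (1 + \<tau> / \<epsilon>^2 + 1 / \<epsilon>) * norm (g (x k))"
proof -
  obtain b d y where dir: "cg_dir g \<tau> \<epsilon> x k = g (x k) + b *\<^sub>R d"
    and b: "b = 0 \<or> b = beta_tilde \<tau> \<epsilon> d y (g (x k))"
    by (rule cg_dir_eq_add_scaleR)
  have "norm (cg_dir g \<tau> \<epsilon> x k) \<le> norm (g (x k)) + \<bar>b\<bar> * norm d"
    using dir norm_triangle_ineq[of "g (x k)" "b *\<^sub>R d"] by simp
  moreover have "\<bar>b\<bar> * norm d \<le> (\<tau> / \<epsilon>^2 + 1 / \<epsilon>) * norm (g (x k))"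
    using b abs_beta_tilde_mult_norm_le[OF assms] assms by auto
  ultimately show ?thesis by (simp add: algebra_simps)
qed

theorem lemma3p3:
  fixes g :: "'a::euclidean_space \<Rightarrow> 'a" and x :: "nat \<Rightarrow> 'a" and \<tau> \<epsilon> :: real
  assumes "1/4 < \<tau>" and "\<tau> < 1" and "\<epsilon> > 0"
    and "\<And>k. x k \<noteq> 0"
  shows "(\<forall>k. cg_dir g \<tau> \<epsilon> x k \<bullet> g (x k) \<ge> (1 - 1 / (4 * \<tau>)) * (norm (g (x k)))^2)
       \<and> (\<exists>M0 > 1. \<forall>k. norm (cg_dir g \<tau> \<epsilon> x k) \<le> M0 * norm (g (x k)))"
proof
  have \<tau>: "\<tau> > 0" using assms(1) by simp
  show "\<forall>k. cg_dir g \<tau> \<epsilon> x k \<bullet> g (x k) \<ge> (1 - 1 / (4 * \<tau>)) * (norm (g (x k)))^2"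
    using cg_dir_inner_ge[OF \<tau>] by blast
  have "1 + \<tau> / \<epsilon>^2 + 1 / \<epsilon> > 1" using \<tau> assms(3) by (simp add: add_pos_pos)
  then show "\<exists>M0 > 1. \<forall>k. norm (cg_dir g \<tau> \<epsilon> x k) \<le> M0 * norm (g (x k))"
    using norm_cg_dir_le[OF less_imp_le[OF \<tau>] assms(3)] by blast
qed

end
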